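(* Let $A$ be an evolution algebra (finite or infinite dimensional) over a commutative ring $R$ with basis $\{x_i:i\in I\}$ and structure coefficients $c_{ki}$. Let $n\ge 2$. Then $A^n=(0)$ if and only if for every sequence of indices $i_1,i_2,\dots,i_n\in I$, $$c_{i_ni_{n-1}}c_{i_{n-1}i_{n-2}}\cdots c_{i_2i_1}=0.$$ In particular, $A$ is nilpotent if and only if there is $n$ for which this holds for all such sequences.
   Context: An evolution algebra over a commutative ring $R$ is a free $R$-module $A$ with basis $\{x_i:i\in I\}$ equipped with the $R$-bilinear multiplication determined by $x_ix_j=0$ for $i\ne j$ and $x_i^2=\sum_{k\in I}c_{ki}x_k$ with $c_{ki}\in R$ (finitely many nonzero for each $i$). The principal powers of $A$ are $A^1=A$ and $A^n=A^{n-1}A$, the $R$-span of all products $uv$ with $u\in A^{n-1}$, $v\in A$. $A$ is nilpotent if $A^n=(0)$ for some $n\in\mathbb{N}$. *)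

theory Defs
  imports Main
begin

text \<open>An evolution algebra over a commutative ring 'r with basis indexed by the type 'i
  is modelled as the free module of finitely supported functions 'i \<Rightarrow> 'r
  (the coordinate vectors w.r.t. the basis x_i). The structure coefficients are
  c k i (coefficient of x_k in x_i^2), finitely many nonzero for each i.\<close>

definition ev_elems :: "('i \<Rightarrow> 'r::comm_ring_1) set" where
  "ev_elems = {u. finite {i. u i \<noteq> 0}}"

definition ev_coeffs_ok :: "('i \<Rightarrow> 'i \<Rightarrow> 'r::comm_ring_1) \<Rightarrow> bool" where
  "ev_coeffs_ok c \<longleftrightarrow> (\<forall>i. finite {k. c k i \<noteq> 0})"

text \<open>Bilinear product: x_i x_j = 0 for i \<noteq> j, x_i^2 = sum_k c k i x_k.\<close>
definition ev_mult :: "('i \<Rightarrow> 'i \<Rightarrow> 'r::comm_ring_1) \<Rightarrow> ('i \<Rightarrow> 'r) \<Rightarrow> ('i \<Rightarrow> 'r) \<Rightarrow> ('i \<Rightarrow> 'r)" where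
  "ev_mult c u v = (\<lambda>k. \<Sum>i\<in>{i. u i \<noteq> 0}. u i * v i * c k i)"

definition ev_span :: "('i \<Rightarrow> 'r::comm_ring_1) set \<Rightarrow> ('i \<Rightarrow> 'r) set" where
  "ev_span S = {w. \<exists>F a. finite F \<and> F \<subseteq> S \<and> w = (\<lambda>k. \<Sum>s\<in>F. a s * s k)}"

text \<open>Principal powers: A^1 = A, A^(n+1) = span of products u v, u in A^n, v in A.
  (The value at 0 is a junk value, equal to A.)\<close>
fun ev_pow :: "('i \<Rightarrow> 'i \<Rightarrow> 'r::comm_ring_1) \<Rightarrow> nat \<Rightarrow> ('i \<Rightarrow> 'r) set" where
  "ev_pow c 0 = ev_elems"
| "ev_pow c (Suc 0) = ev_elems"
| "ev_pow c (Suc (Suc n)) =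
     ev_span {ev_mult c u v | u v. u \<in> ev_pow c (Suc n) \<and> v \<in> ev_elems}"

definition ev_nilpotent :: "('i \<Rightarrow> 'i \<Rightarrow> 'r::comm_ring_1) \<Rightarrow> bool" where
  "ev_nilpotent c \<longleftrightarrow> (\<exists>n\<ge>1. ev_pow c n = {\<lambda>_. 0})"

end

theory Submission
  imports Defs
begin

text \<open>Write \<open>\<gamma>(s; a, b) = c(s(b), s(b-1)) \<cdots> c(s(a+1), s(a))\<close> for the coefficient of the
  path \<open>s(a) \<rightarrow> \<cdots> \<rightarrow> s(b)\<close>. Multiplying \<open>x(s(1))\<close> on the right successively by
  \<open>x(s(1)), \<dots>, x(s(m))\<close> gives \<open>\<gamma>(s; 1, m) x(s(m))\<^sup>2 \<in> A\<^sup>m\<^sup>+\<^sup>1\<close>, whose \<open>x(s(m+1))\<close>-coordinate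
  is \<open>\<gamma>(s; 1, m+1)\<close>; so \<open>A\<^sup>n = 0\<close> kills all path coefficients of length \<open>n - 1\<close>.
  Conversely, by induction on \<open>m\<close> every \<open>w \<in> A\<^sup>m\<close> satisfies \<open>w(s(m)) \<gamma>(s; m, n) = 0\<close> for all
  paths \<open>s\<close>: the property is linear in \<open>w\<close>, and for \<open>w = u v\<close> the coordinate
  \<open>w(k) = \<Sum>\<^sub>i u(i) v(i) c(k, i)\<close> reduces it to the property of \<open>u\<close> along the path with \<open>s(m-1)\<close>
  replaced by \<open>i\<close>. For \<open>m = n\<close> the path can be constant at any \<open>k\<close>, giving \<open>w(k) = 0\<close>.\<close>

definition ev_basis :: "'i \<Rightarrow> ('i \<Rightarrow> 'r::comm_ring_1)" where
  "ev_basis j = (\<lambda>i. if i = j then 1 else 0)"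

definition ev_path_coeff ::
    "('i \<Rightarrow> 'i \<Rightarrow> 'r::comm_ring_1) \<Rightarrow> (nat \<Rightarrow> 'i) \<Rightarrow> nat \<Rightarrow> nat \<Rightarrow> 'r" where
  "ev_path_coeff c s a b = (\<Prod>j\<in>{a..<b}. c (s (Suc j)) (s j))"

lemma ev_basis_in_elems: "ev_basis j \<in> ev_elems"
proof -
  have "{i. ev_basis j i \<noteq> 0} \<subseteq> {j}" by (auto simp: ev_basis_def)
  then show ?thesis unfolding ev_elems_def by (auto intro: finite_subset)
qed

lemma ev_mult_basis_right:
  assumes "finite {i. u i \<noteq> 0}"
  shows "ev_mult c u (ev_basis j) = (\<lambda>k. u j * c k j)"
proof
  fix k
  have "ev_mult c u (ev_basis j) k = (\<Sum>i\<in>{i. u i \<noteq> 0}. if i = j then u i * c k i else 0)"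
    unfolding ev_mult_def ev_basis_def by (rule sum.cong) auto
  also have "\<dots> = u j * c k j"
    using assms by (simp add: sum.delta')
  finally show "ev_mult c u (ev_basis j) k = u j * c k j" .
qed

lemma ev_mult_left_zero: "ev_mult c (\<lambda>_. 0) v = (\<lambda>_. 0)"
  by (simp add: ev_mult_def)

lemma ev_span_superset: "S \<subseteq> ev_span S"
proof
  fix p assume "p \<in> S"
  then show "p \<in> ev_span S"
    unfolding ev_span_def by (intro CollectI exI[of _ "{p}"] exI[of _ "\<lambda>_. 1"]) auto
qed

lemma zero_in_ev_span: "(\<lambda>_. 0) \<in> ev_span S"
  unfolding ev_span_def by (intro CollectI exI[of _ "{}"]) auto

lemma ev_span_zero: "ev_span {\<lambda>_. 0} = {\<lambda>_. 0}"
  using zero_in_ev_span by (auto simp: ev_span_def dest!: subset_singletonD)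

lemma ev_span_coord_vanishing:
  assumes "\<And>p. p \<in> S \<Longrightarrow> p k * q = 0" and "w \<in> ev_span S"
  shows "w k * q = 0"
proof -
  obtain F a where "finite F" "F \<subseteq> S" and w: "w = (\<lambda>k. \<Sum>p\<in>F. a p * p k)"
    using assms(2) by (auto simp: ev_span_def)
  then have "w k * q = (\<Sum>p\<in>F. a p * (p k * q))"
    by (simp add: sum_distrib_right mult.assoc)
  also have "\<dots> = 0" using assms(1) \<open>F \<subseteq> S\<close> by (simp add: subset_iff)
  finally show ?thesis .
qed

lemma ev_mult_coord_vanishing:
  assumes "\<And>i. u i * c k i * q = 0"
  shows "ev_mult c u v k * q = 0"
proof -
  have "ev_mult c u v k * q = (\<Sum>i\<in>{i. u i \<noteq> 0}. v i * (u i * c k i * q))"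
    unfolding ev_mult_def by (simp add: sum_distrib_right mult_ac sum_distrib_left)
  also have "\<dots> = 0" using assms by simp
  finally show ?thesis .
qed

lemma zero_in_ev_pow: "(\<lambda>_. 0) \<in> ev_pow c n"
  by (cases "(c, n)" rule: ev_pow.cases) (auto simp: ev_elems_def zero_in_ev_span)

lemma ev_mult_in_ev_pow_Suc:
  assumes "u \<in> ev_pow c (Suc m)" and "v \<in> ev_elems"
  shows "ev_mult c u v \<in> ev_pow c (Suc (Suc m))"
  using assms ev_span_superset by fastforce

lemma ev_pow_Suc_eq_zero:
  assumes "m \<ge> 1" and "ev_pow c m = {\<lambda>_. 0}"
  shows "ev_pow c (Suc m) = {\<lambda>_. 0}"
proof -
  obtain k where "m = Suc k" using assms(1) by (cases m) auto
  then have "{ev_mult c u v | u v. u \<in> ev_pow c m \<and> v \<in> ev_elems} = {\<lambda>_. 0}"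
    using assms(2) zero_in_ev_pow[of c 0] by (auto simp: ev_mult_left_zero)
  then show ?thesis using \<open>m = Suc k\<close> by (simp add: ev_span_zero)
qed

lemma ev_path_coeff_Suc_right:
  "a \<le> b \<Longrightarrow> ev_path_coeff c s a (Suc b) = ev_path_coeff c s a b * c (s (Suc b)) (s b)"
  by (simp add: ev_path_coeff_def prod.atLeastLessThan_Suc)

lemma ev_path_coeff_Suc_left:
  "a < b \<Longrightarrow> ev_path_coeff c s a b = c (s (Suc a)) (s a) * ev_path_coeff c s (Suc a) b"
  by (simp add: ev_path_coeff_def prod.atLeast_Suc_lessThan)

lemma ev_path_coeff_upd_below:
  "j < a \<Longrightarrow> ev_path_coeff c (s(j := i)) a b = ev_path_coeff c s a b"
  unfolding ev_path_coeff_def by (rule prod.cong) auto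

lemma ev_path_coeff_split:
  "a \<le> b \<Longrightarrow> b \<le> d \<Longrightarrow> ev_path_coeff c s a d = ev_path_coeff c s a b * ev_path_coeff c s b d"
  unfolding ev_path_coeff_def by (simp add: prod.atLeastLessThan_concat)

lemma ev_path_coeff_vanishing_mono:
  fixes c :: "'i \<Rightarrow> 'i \<Rightarrow> 'r::comm_ring_1"
  assumes "\<forall>s. ev_path_coeff c s 1 m = 0" and "m \<le> m'"
  shows "ev_path_coeff c s 1 m' = 0"
proof (cases "m \<ge> 1")
  case True
  then show ?thesis using assms ev_path_coeff_split[of 1 m m' c s] by simp
next
  case False
  then have "(1::'r) = 0" using assms(1) by (simp add: ev_path_coeff_def)
  then show ?thesis by (metis mult_1 mult_zero_left)
qed

lemma ev_path_element_in_ev_pow: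
  assumes "ev_coeffs_ok c" and "m \<ge> 1"
  shows "(\<lambda>k. ev_path_coeff c s 1 m * c k (s m)) \<in> ev_pow c (Suc m)"
  using assms(2)
proof (induction m rule: dec_induct)
  case base
  have "ev_mult c (ev_basis (s 1)) (ev_basis (s 1)) \<in> ev_pow c (Suc 1)"
    using ev_mult_in_ev_pow_Suc[of "ev_basis (s 1)" c 0 "ev_basis (s 1)"]
    by (simp add: ev_basis_in_elems)
  moreover have "ev_mult c (ev_basis (s 1)) (ev_basis (s 1)) = (\<lambda>k. c k (s 1))"
    using ev_mult_basis_right[of "ev_basis (s 1)" c "s 1"] ev_basis_in_elems[of "s 1"]
    by (simp add: ev_elems_def del: ev_basis_def) (simp add: ev_basis_def)
  ultimately show ?case by (simp add: ev_path_coeff_def)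
next
  case (step m)
  let ?u = "\<lambda>k. ev_path_coeff c s 1 m * c k (s m)"
  have "{k. ?u k \<noteq> 0} \<subseteq> {k. c k (s m) \<noteq> 0}" by auto
  then have "finite {k. ?u k \<noteq> 0}"
    using assms(1) unfolding ev_coeffs_ok_def by (auto intro: finite_subset)
  moreover have "ev_mult c ?u (ev_basis (s (Suc m))) \<in> ev_pow c (Suc (Suc m))"
    using ev_mult_in_ev_pow_Suc[OF step.IH ev_basis_in_elems] .
  ultimately show ?case
    using step.hyps by (simp add: ev_mult_basis_right ev_path_coeff_Suc_right)
qed

lemma ev_pow_coord_path_vanishing:
  assumes paths: "\<forall>s. ev_path_coeff c s 1 n = 0"
    and "Suc m \<le> n" and "w \<in> ev_pow c (Suc m)"
  shows "w (s (Suc m)) * ev_path_coeff c s (Suc m) n = 0"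
  using assms(2,3)
proof (induction m arbitrary: w s)
  case 0
  then show ?case using paths by simp
next
  case (Suc m)
  have "u (s (Suc (Suc m))) * ev_path_coeff c s (Suc (Suc m)) n = 0"
    if u: "u \<in> {ev_mult c u v | u v. u \<in> ev_pow c (Suc m) \<and> v \<in> ev_elems}" for u
  proof -
    obtain u' v where "u = ev_mult c u' v" and u': "u' \<in> ev_pow c (Suc m)" using u by auto
    moreover have "u' i * c (s (Suc (Suc m))) i * ev_path_coeff c s (Suc (Suc m)) n = 0" for i
    proof -
      have "ev_path_coeff c (s(Suc m := i)) (Suc m) n
          = c (s (Suc (Suc m))) i * ev_path_coeff c s (Suc (Suc m)) n"
        using Suc.prems(1) by (simp add: ev_path_coeff_Suc_left ev_path_coeff_upd_below)
      moreover have "u' i * ev_path_coeff c (s(Suc m := i)) (Suc m) n = 0"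
        using Suc.IH[OF Suc_leD[OF Suc.prems(1)] u', of "s(Suc m := i)"]
        by (simp only: fun_upd_same)
      ultimately show ?thesis by (simp add: mult.assoc)
    qed
    ultimately show ?thesis by (simp add: ev_mult_coord_vanishing)
  qed
  moreover have "w \<in> ev_span {ev_mult c u v | u v. u \<in> ev_pow c (Suc m) \<and> v \<in> ev_elems}"
    using Suc.prems(2) by simp
  ultimately show ?case by (rule ev_span_coord_vanishing)
qed

lemma ev_pow_eq_zero_iff:
  assumes "ev_coeffs_ok c" and "n \<ge> 2"
  shows "ev_pow c n = {\<lambda>_. 0} \<longleftrightarrow> (\<forall>s. ev_path_coeff c s 1 n = 0)"
proof -
  obtain m where n: "n = Suc m" and "m \<ge> 1" using assms(2) by (cases n) auto
  show ?thesis
  proof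
    assume zero: "ev_pow c n = {\<lambda>_. 0}"
    show "\<forall>s. ev_path_coeff c s 1 n = 0"
    proof
      fix s
      have "(\<lambda>k. ev_path_coeff c s 1 m * c k (s m)) \<in> ev_pow c n"
        using ev_path_element_in_ev_pow[OF assms(1) \<open>m \<ge> 1\<close>] n by simp
      then have "ev_path_coeff c s 1 m * c (s n) (s m) = 0"
        using zero by (metis singletonD)
      then show "ev_path_coeff c s 1 n = 0"
        using \<open>m \<ge> 1\<close> by (simp add: n ev_path_coeff_Suc_right)
    qed
  next
    assume paths: "\<forall>s. ev_path_coeff c s 1 n = 0"
    have "w = (\<lambda>_. 0)" if "w \<in> ev_pow c n" for w
    proof
      fix k
      show "w k = 0"
        using ev_pow_coord_path_vanishing[OF paths, of m w "\<lambda>_. k"] that n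
        by (simp add: ev_path_coeff_def)
    qed
    then show "ev_pow c n = {\<lambda>_. 0}" using zero_in_ev_pow by blast
  qed
qed

theorem theorem2p6:
  fixes c :: "'i \<Rightarrow> 'i \<Rightarrow> 'r::comm_ring_1" and n :: nat
  assumes "ev_coeffs_ok c" and "n \<ge> 2"
  shows "(ev_pow c n = {\<lambda>_. 0} \<longleftrightarrow>
           (\<forall>s :: nat \<Rightarrow> 'i. (\<Prod>j\<in>{1..<n}. c (s (Suc j)) (s j)) = 0))
       \<and> (ev_nilpotent c \<longleftrightarrow>
           (\<exists>m. \<forall>s :: nat \<Rightarrow> 'i. (\<Prod>j\<in>{1..<m}. c (s (Suc j)) (s j)) = 0))"
  unfolding ev_path_coeff_def[symmetric]
proof
  show "ev_pow c n = {\<lambda>_. 0} \<longleftrightarrow> (\<forall>s. ev_path_coeff c s 1 n = 0)"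
    using ev_pow_eq_zero_iff[OF assms] .
  show "ev_nilpotent c \<longleftrightarrow> (\<exists>m. \<forall>s. ev_path_coeff c s 1 m = 0)"
  proof
    assume "ev_nilpotent c"
    then obtain k where "k \<ge> 1" "ev_pow c k = {\<lambda>_. 0}" by (auto simp: ev_nilpotent_def)
    then have "ev_pow c (Suc k) = {\<lambda>_. 0}" by (rule ev_pow_Suc_eq_zero)
    then show "\<exists>m. \<forall>s. ev_path_coeff c s 1 m = 0"
      using ev_pow_eq_zero_iff[OF assms(1), of "Suc k"] \<open>k \<ge> 1\<close> by auto
  next
    assume "\<exists>m. \<forall>s. ev_path_coeff c s 1 m = 0"
    then obtain m where "\<forall>s. ev_path_coeff c s 1 (max 2 m) = 0"
      using ev_path_coeff_vanishing_mono by (metis max.cobounded2)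
    then show "ev_nilpotent c"
      using ev_pow_eq_zero_iff[OF assms(1), of "max 2 m"] unfolding ev_nilpotent_def
      by (metis max.cobounded1 le_trans one_le_numeral)
  qed
qed

end
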